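(* Let $1<p<\infty$, $p^*=p/(p-1)$, let $E,F,G$ be Banach spaces, $u\in\mathcal{L}(E;F)$ and $v\in\mathcal{L}(F;G)$. If the adjoint $u^*\colon F^*\to E^*$ is absolutely mid $p^*$-summing and the adjoint $v^*\colon G^*\to F^*$ is weakly mid $p^*$-summing, then $v\circ u$ is Cohen strongly $p$-summing.
   Context: For a Banach space $X$ and $1\le r\le\infty$: $\ell_r(X)$ absolutely $r$-summable sequences; $\ell_r^w(X)$ sequences with $\sup_{x^*\in B_{X^*}}\|(x^*(x_j))_j\|_r<\infty$; for $r<\infty$, $\ell_r^{mid}(X)$ the $(x_j)\in\ell_r^w(X)$ with $\sum_n\sum_j|x_n^*(x_j)|^r<\infty$ for every $(x_n^* )\in\ell_r^w(X^* )$; $\ell_p\langle X\rangle$ the $(x_j)$ with $\sup_{(x_j^* )\in B_{\ell_{p^*}^w(X^* )}}\sum_j|x_j^*(x_j)|<\infty$. A bounded linear $T\colon X\to Y$ is absolutely mid $r$-summing if $(T(x_j))\in\ell_r(Y)$ whenever $(x_j)\in\ell_r^{mid}(X)$; weakly mid $r$-summing if $(T(x_j))\in\ell_r^{mid}(Y)$ whenever $(x_j)\in\ell_r^w(X)$; Cohen strongly $p$-summing if $(T(x_j))\in\ell_p\langle Y\rangle$ whenever $(x_j)\in\ell_p(X)$. *)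

theory Defs
  imports "HOL-Analysis.Analysis"
begin

text \<open>Real Banach spaces are modelled by the type class banach; the dual X* of X
is the type of bounded linear functionals X to real.  All exponents r are
finite reals with r \<ge> 1.\<close>

definition strongly_summable :: "real \<Rightarrow> (nat \<Rightarrow> 'a::real_normed_vector) \<Rightarrow> bool" where
  "strongly_summable r x \<longleftrightarrow> summable (\<lambda>j. norm (x j) powr r)"

definition weak_norm_le :: "real \<Rightarrow> real \<Rightarrow> (nat \<Rightarrow> 'a::real_normed_vector) \<Rightarrow> bool" where
  "weak_norm_le r C x \<longleftrightarrow>
     (\<forall>\<phi> :: 'a \<Rightarrow>\<^sub>L real. norm \<phi> \<le> 1 \<longrightarrow>
        summable (\<lambda>j. \<bar>blinfun_apply \<phi> (x j)\<bar> powr r) \<and> (\<Sum>j. \<bar>blinfun_apply \<phi> (x j)\<bar> powr r) powr (1 / r) \<le> C)"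

definition weakly_summable :: "real \<Rightarrow> (nat \<Rightarrow> 'a::real_normed_vector) \<Rightarrow> bool" where
  "weakly_summable r x \<longleftrightarrow> (\<exists>C. weak_norm_le r C x)"

definition mid_summable :: "real \<Rightarrow> (nat \<Rightarrow> 'a::real_normed_vector) \<Rightarrow> bool" where
  "mid_summable r x \<longleftrightarrow> weakly_summable r x \<and>
     (\<forall>\<phi> :: nat \<Rightarrow> ('a \<Rightarrow>\<^sub>L real). weakly_summable r \<phi> \<longrightarrow>
        (\<forall>n. summable (\<lambda>j. \<bar>blinfun_apply (\<phi> n) (x j)\<bar> powr r)) \<and>
        summable (\<lambda>n. \<Sum>j. \<bar>blinfun_apply (\<phi> n) (x j)\<bar> powr r))"

definition cohen_summable :: "real \<Rightarrow> (nat \<Rightarrow> 'a::real_normed_vector) \<Rightarrow> bool" where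
  "cohen_summable p x \<longleftrightarrow>
     (\<exists>C. \<forall>\<phi> :: nat \<Rightarrow> ('a \<Rightarrow>\<^sub>L real). weak_norm_le (p / (p - 1)) 1 \<phi> \<longrightarrow>
        summable (\<lambda>j. \<bar>blinfun_apply (\<phi> j) (x j)\<bar>) \<and> (\<Sum>j. \<bar>blinfun_apply (\<phi> j) (x j)\<bar>) \<le> C)"

definition absolutely_mid_summing :: "real \<Rightarrow> ('a::real_normed_vector \<Rightarrow> 'b::real_normed_vector) \<Rightarrow> bool" where
  "absolutely_mid_summing r T \<longleftrightarrow> bounded_linear T \<and>
     (\<forall>x. mid_summable r x \<longrightarrow> strongly_summable r (\<lambda>j. T (x j)))"

definition weakly_mid_summing :: "real \<Rightarrow> ('a::real_normed_vector \<Rightarrow> 'b::real_normed_vector) \<Rightarrow> bool" where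
  "weakly_mid_summing r T \<longleftrightarrow> bounded_linear T \<and>
     (\<forall>x. weakly_summable r x \<longrightarrow> mid_summable r (\<lambda>j. T (x j)))"

definition cohen_strongly_summing :: "real \<Rightarrow> ('a::real_normed_vector \<Rightarrow> 'b::real_normed_vector) \<Rightarrow> bool" where
  "cohen_strongly_summing p T \<longleftrightarrow> bounded_linear T \<and>
     (\<forall>x. strongly_summable p x \<longrightarrow> cohen_summable p (\<lambda>j. T (x j)))"

definition adjoint_op :: "('a::real_normed_vector \<Rightarrow>\<^sub>L 'b::real_normed_vector) \<Rightarrow> ('b \<Rightarrow>\<^sub>L real) \<Rightarrow> ('a \<Rightarrow>\<^sub>L real)" where
  "adjoint_op u = (\<lambda>f. f o\<^sub>L u)"

end

theory Submission
  imports Defs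
begin

text \<open>Let x \<in> \<ell>_p(E) and let (\<phi>_j) be weakly p*-summable in G*. The adjoint v* makes
(\<phi>_j) mid p*-summable and u* then makes it absolutely p*-summable, so the functionals
\<phi>_j \<circ> v \<circ> u are p*-summable in norm and Young's inequality gives \<Sum>_j |\<phi>_j(v(u x_j))| < \<infinity>.
The uniform bound over the weak unit ball required by \<ell>_p\<langle>G\<rangle> follows by a gliding hump:
if sequences \<phi>^k in the ball had pairings exceeding 2^(k+1) k, then \<Sum>_k 2^-(k+1) \<plusminus>\<phi>^k, with
signs chosen to avoid cancellation, still lies in the ball by convexity of t \<mapsto> t^p*, but
its pairing exceeds every k.\<close>

lemma powr_le_one_iff:
  fixes x a :: real
  assumes "0 \<le> x" "0 < a"
  shows "x powr a \<le> 1 \<longleftrightarrow> x \<le> 1"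
  using powr_mono2[of a x 1] powr_less_mono2[of a 1 x] assms by (auto simp: not_le[symmetric])

lemma weak_norm_le_one_iff:
  assumes "r > 0"
  shows "weak_norm_le r 1 x \<longleftrightarrow>
    (\<forall>\<psi>. norm \<psi> \<le> 1 \<longrightarrow> summable (\<lambda>j. \<bar>blinfun_apply \<psi> (x j)\<bar> powr r) \<and>
        (\<Sum>j. \<bar>blinfun_apply \<psi> (x j)\<bar> powr r) \<le> 1)"
  unfolding weak_norm_le_def using assms
  by (metis (no_types, lifting) powr_le_one_iff powr_ge_zero suminf_nonneg divide_pos_pos zero_less_one)

lemma weak_norm_le_one_abs_le_one:
  fixes \<psi> :: "'a::real_normed_vector \<Rightarrow>\<^sub>L real"
  assumes "weak_norm_le r 1 x" "r > 0" "norm \<psi> \<le> 1"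
  shows "\<bar>blinfun_apply \<psi> (x j)\<bar> \<le> 1"
proof -
  have "\<bar>blinfun_apply \<psi> (x j)\<bar> powr r \<le> (\<Sum>j. \<bar>blinfun_apply \<psi> (x j)\<bar> powr r)"
    using assms sum_le_suminf[of _ "{j}"] by (force simp: weak_norm_le_one_iff)
  also have "\<dots> \<le> 1"
    using assms by (simp add: weak_norm_le_one_iff)
  finally show ?thesis
    using assms(2) powr_le_one_iff by force
qed

lemma suminf_weighted_le_if_powr_bound:
  fixes c t :: "nat \<Rightarrow> real" and q l :: real
  assumes q: "q > 1" and c: "\<And>k. c k \<ge> 0" "summable c" "suminf c \<le> 1"
    and t: "\<And>k. t k \<ge> 0"
    and summable_powr: "summable (\<lambda>k. c k * t k powr q)"
    and summable_t: "summable (\<lambda>k. c k * t k)"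
    and l: "l > 0" "(\<Sum>k. c k * t k powr q) \<le> l powr q"
  shows "(\<Sum>k. c k * t k) \<le> l"
proof -
  define r where "r = q / (q - 1)"
  have r: "r > 1" "1 / r + 1 / q = 1" using q by (auto simp: r_def field_simps)
  \<comment> \<open>Young's inequality for the numbers 1 and t k / l, weighted by c k\<close>
  have Young: "c k * t k / l \<le> c k / r + c k * t k powr q / (l powr q * q)" for k
  proof -
    have "t k / l \<le> 1 / r + (t k / l) powr q / q"
      using Youngs_inequality[OF r(1) q r(2), of 1 "t k / l"] t[of k] l by simp
    then have "t k / l \<le> 1 / r + t k powr q / (l powr q * q)"
      using l t[of k] by (simp add: powr_divide)
    from mult_left_mono[OF this c(1)[of k]] show ?thesis
      by (simp add: field_simps)
  qed
  have "(\<Sum>k. c k * t k) / l = (\<Sum>k. c k * t k / l)"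
    using summable_t by (simp add: suminf_divide)
  also have "\<dots> \<le> (\<Sum>k. c k / r + c k * t k powr q / (l powr q * q))"
    using summable_t summable_powr c(2)
    by (intro suminf_le[OF Young]) (auto intro!: summable_add summable_divide)
  also have "\<dots> = suminf c / r + (\<Sum>k. c k * t k powr q) / (l powr q * q)"
    using summable_powr c(2)
    by (subst suminf_add[symmetric]) (auto intro!: summable_divide simp: suminf_divide)
  also have "\<dots> \<le> 1 / r + l powr q / (l powr q * q)"
    using c(3) r(1) l q by (intro add_mono divide_right_mono) auto
  also have "\<dots> = 1"
    using l r(2) by simp
  finally show ?thesis
    using l by simp
qed

lemma powr_suminf_weighted_le:
  fixes c t :: "nat \<Rightarrow> real" and q :: real
  assumes q: "q > 1" and c: "\<And>k. c k \<ge> 0" "summable c" "suminf c \<le> 1"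
    and t: "\<And>k. t k \<ge> 0"
    and summable_powr: "summable (\<lambda>k. c k * t k powr q)"
    and summable_t: "summable (\<lambda>k. c k * t k)"
  shows "(\<Sum>k. c k * t k) powr q \<le> (\<Sum>k. c k * t k powr q)"
proof -
  define T where "T = (\<Sum>k. c k * t k powr q)"
  note bound = suminf_weighted_le_if_powr_bound[OF q c t summable_powr summable_t, folded T_def]
  have "T \<ge> 0" "(\<Sum>k. c k * t k) \<ge> 0"
    unfolding T_def using summable_powr summable_t c t by (auto intro!: suminf_nonneg)
  show ?thesis
  proof (cases "T > 0")
    case True
    then have "(\<Sum>k. c k * t k) \<le> T powr (1 / q)"
      using bound q by (simp add: powr_powr)
    then have "(\<Sum>k. c k * t k) powr q \<le> (T powr (1 / q)) powr q"
      using q \<open>(\<Sum>k. c k * t k) \<ge> 0\<close> by (intro powr_mono2) auto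
    then show ?thesis
      using True q by (simp add: powr_powr T_def)
  next
    case False
    then have "T = 0"
      using \<open>T \<ge> 0\<close> by simp
    then have "(\<Sum>k. c k * t k) \<le> 0 + l" if "l > 0" for l
      using bound[of l] that by simp
    then have "(\<Sum>k. c k * t k) \<le> 0"
      by (rule field_le_epsilon)
    then show ?thesis
      using \<open>T \<ge> 0\<close> \<open>(\<Sum>k. c k * t k) \<ge> 0\<close> q by (simp add: T_def)
  qed
qed

lemma suminf_weighted_rows_le:
  fixes a :: "nat \<Rightarrow> nat \<Rightarrow> real" and c :: "nat \<Rightarrow> real"
  assumes a: "\<And>k j. a k j \<ge> 0" "\<And>k. summable (a k)" "\<And>k. (\<Sum>j. a k j) \<le> 1"
    and c: "\<And>k. c k \<ge> 0" "summable c"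
    and summable_columns: "\<And>j. summable (\<lambda>k. c k * a k j)"
  shows "summable (\<lambda>j. \<Sum>k. c k * a k j)" and "(\<Sum>j. \<Sum>k. c k * a k j) \<le> suminf c"
proof -
  have partial_sums: "(\<Sum>j<N. \<Sum>k. c k * a k j) \<le> suminf c" for N
  proof -
    have "(\<Sum>j<N. \<Sum>k. c k * a k j) = (\<Sum>k. \<Sum>j<N. c k * a k j)"
      using summable_columns by (rule suminf_sum[symmetric])
    also have "\<dots> \<le> suminf c"
    proof (rule suminf_le)
      fix k
      have "(\<Sum>j<N. a k j) \<le> 1"
        using sum_le_suminf[OF a(2)[of k], of "{..<N}"] a(1,3)[of k] by force
      then show "(\<Sum>j<N. c k * a k j) \<le> c k"
        using c(1)[of k] by (simp add: sum_distrib_left[symmetric] mult_left_le)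
    qed (auto intro: summable_sum summable_columns c(2))
    finally show ?thesis .
  qed
  have "(\<Sum>k. c k * a k j) \<ge> 0" for j
    using summable_columns a(1) c(1) by (intro suminf_nonneg) auto
  then show "summable (\<lambda>j. \<Sum>k. c k * a k j)"
    using partial_sums by (rule summableI_nonneg_bounded)
  then show "(\<Sum>j. \<Sum>k. c k * a k j) \<le> suminf c"
    using partial_sums by (rule suminf_le_const)
qed

definition eval_blinfun :: "'a::real_normed_vector \<Rightarrow> ('a \<Rightarrow>\<^sub>L real) \<Rightarrow>\<^sub>L real" where
  "eval_blinfun x = Blinfun (\<lambda>f. blinfun_apply f x)"

lemma eval_blinfun_apply [simp]: "blinfun_apply (eval_blinfun x) f = blinfun_apply f x"
  unfolding eval_blinfun_def by (simp add: bounded_linear_Blinfun_apply)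

lemma norm_eval_blinfun_le: "norm (eval_blinfun x) \<le> norm x"
  by (rule norm_blinfun_bound) (auto, metis mult.commute norm_blinfun real_norm_def)

lemma norm_le_one_if_weak_norm_le_one:
  fixes \<phi> :: "nat \<Rightarrow> ('a::real_normed_vector \<Rightarrow>\<^sub>L real)"
  assumes "weak_norm_le r 1 \<phi>" "r > 0"
  shows "norm (\<phi> j) \<le> 1"
proof (rule norm_blinfun_bound)
  fix x
  show "norm (blinfun_apply (\<phi> j) x) \<le> 1 * norm x"
  proof (cases "x = 0")
    case False
    define \<psi> where "\<psi> = eval_blinfun x /\<^sub>R norm x"
    have "norm \<psi> \<le> 1"
      using norm_eval_blinfun_le[of x] False by (simp add: \<psi>_def field_simps)
    then have "\<bar>blinfun_apply \<psi> (\<phi> j)\<bar> \<le> 1"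
      by (rule weak_norm_le_one_abs_le_one[OF assms])
    then show ?thesis
      using False by (simp add: \<psi>_def blinfun.scaleR_left abs_mult field_simps)
  qed simp
qed simp

lemma weak_norm_le_scaleR_sign:
  assumes "\<And>j. \<bar>s j\<bar> = 1" "weak_norm_le r C x"
  shows "weak_norm_le r C (\<lambda>j. s j *\<^sub>R x j)"
  using assms unfolding weak_norm_le_def by (simp add: blinfun.scaleR_right abs_mult)

lemma summable_scaleR_if_norm_bounded:
  fixes f :: "nat \<Rightarrow> 'a::banach"
  assumes "\<And>k. c k \<ge> 0" "summable c" "\<And>k. norm (f k) \<le> B"
  shows "summable (\<lambda>k. c k *\<^sub>R f k)"
  using assms by (intro summable_comparison_test'[OF summable_mult2[OF assms(2), of B]])
    (auto intro: mult_left_mono)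

lemma weak_norm_le_one_suminf_scaleR:
  fixes \<theta> :: "nat \<Rightarrow> nat \<Rightarrow> 'a::banach" and c :: "nat \<Rightarrow> real"
  assumes q: "q > 1"
    and \<theta>: "\<And>k. weak_norm_le q 1 (\<theta> k)" "\<And>k j. norm (\<theta> k j) \<le> B"
    and c: "\<And>k. c k \<ge> 0" "summable c" "suminf c \<le> 1"
  shows "weak_norm_le q 1 (\<lambda>j. \<Sum>k. c k *\<^sub>R \<theta> k j)"
  unfolding weak_norm_le_one_iff[OF order.strict_trans[OF zero_less_one q]]
proof (intro allI impI)
  fix \<psi> :: "'a \<Rightarrow>\<^sub>L real"
  assume \<psi>: "norm \<psi> \<le> 1"
  define b where "b k j = \<bar>blinfun_apply \<psi> (\<theta> k j)\<bar>" for k j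
  have b_le_one: "b k j \<le> 1" for k j
    unfolding b_def using weak_norm_le_one_abs_le_one[OF \<theta>(1) _ \<psi>] q by simp
  have b_rows: "summable (\<lambda>j. b k j powr q)" "(\<Sum>j. b k j powr q) \<le> 1" for k
    using \<theta>(1)[of k] \<psi> q unfolding b_def by (auto simp: weak_norm_le_one_iff)
  have b_powr_le_one: "b k j powr q \<le> 1" for k j
    using b_le_one[of k j] q by (simp add: b_def powr_le1)
  have apply_suminf: "blinfun_apply \<psi> (\<Sum>k. c k *\<^sub>R \<theta> k j) = (\<Sum>k. c k * blinfun_apply \<psi> (\<theta> k j))" for j
    using bounded_linear.suminf[OF blinfun.bounded_linear_right
        summable_scaleR_if_norm_bounded[where f="\<lambda>k. \<theta> k j", OF c(1,2) \<theta>(2)], of \<psi>]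
    by (simp add: blinfun.scaleR_right)
  have summable_b: "summable (\<lambda>k. c k * b k j)" for j
    using summable_scaleR_if_norm_bounded[OF c(1,2), of "\<lambda>k. b k j" 1] b_le_one by (simp add: b_def)
  have summable_b_powr: "summable (\<lambda>k. c k * b k j powr q)" for j
    using summable_scaleR_if_norm_bounded[OF c(1,2), of "\<lambda>k. b k j powr q" 1] b_powr_le_one by simp
  have coordinate_le: "\<bar>blinfun_apply \<psi> (\<Sum>k. c k *\<^sub>R \<theta> k j)\<bar> powr q \<le> (\<Sum>k. c k * b k j powr q)" for j
  proof -
    have "(\<lambda>k. \<bar>c k * blinfun_apply \<psi> (\<theta> k j)\<bar>) = (\<lambda>k. c k * b k j)"
      by (simp add: b_def abs_mult abs_of_nonneg[OF c(1)])
    then have "\<bar>blinfun_apply \<psi> (\<Sum>k. c k *\<^sub>R \<theta> k j)\<bar> \<le> (\<Sum>k. c k * b k j)"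
      using summable_rabs[of "\<lambda>k. c k * blinfun_apply \<psi> (\<theta> k j)"] summable_b[of j]
      by (simp add: apply_suminf)
    then have "\<bar>blinfun_apply \<psi> (\<Sum>k. c k *\<^sub>R \<theta> k j)\<bar> powr q \<le> (\<Sum>k. c k * b k j) powr q"
      using q by (intro powr_mono2) auto
    also have "\<dots> \<le> (\<Sum>k. c k * b k j powr q)"
      by (rule powr_suminf_weighted_le[OF q c _ summable_b_powr summable_b]) (simp add: b_def)
    finally show ?thesis .
  qed
  note rows = suminf_weighted_rows_le[of "\<lambda>k j. b k j powr q",
      OF powr_ge_zero b_rows c(1,2) summable_b_powr]
  have "summable (\<lambda>j. \<bar>blinfun_apply \<psi> (\<Sum>k. c k *\<^sub>R \<theta> k j)\<bar> powr q)"
    using coordinate_le by (intro summable_comparison_test'[OF rows(1)]) auto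
  moreover have "(\<Sum>j. \<bar>blinfun_apply \<psi> (\<Sum>k. c k *\<^sub>R \<theta> k j)\<bar> powr q) \<le> 1"
    using suminf_le[OF coordinate_le calculation rows(1)] rows(2) c(3) by linarith
  ultimately show "summable (\<lambda>j. \<bar>blinfun_apply \<psi> (\<Sum>k. c k *\<^sub>R \<theta> k j)\<bar> powr q) \<and>
      (\<Sum>j. \<bar>blinfun_apply \<psi> (\<Sum>k. c k *\<^sub>R \<theta> k j)\<bar> powr q) \<le> 1" ..
qed

lemma exists_weak_norm_le_one_dominating_pairings:
  fixes y :: "nat \<Rightarrow> 'a::real_normed_vector" and F :: "nat \<Rightarrow> nat \<Rightarrow> ('a \<Rightarrow>\<^sub>L real)"
  assumes q: "q > 1" and F: "\<And>k. weak_norm_le q 1 (F k)"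
    and summable_pairing: "\<And>\<phi> :: nat \<Rightarrow> ('a \<Rightarrow>\<^sub>L real).
      weak_norm_le q 1 \<phi> \<Longrightarrow> summable (\<lambda>j. \<bar>blinfun_apply (\<phi> j) (y j)\<bar>)"
  shows "\<exists>\<Phi>. weak_norm_le q 1 \<Phi> \<and>
    (\<forall>k. (1/2)^Suc k * (\<Sum>j. \<bar>blinfun_apply (F k j) (y j)\<bar>) \<le> (\<Sum>j. \<bar>blinfun_apply (\<Phi> j) (y j)\<bar>))"
proof -
  define \<theta> where "\<theta> k j = (if blinfun_apply (F k j) (y j) \<ge> 0 then 1 else -1::real) *\<^sub>R F k j" for k j
  have \<theta>: "weak_norm_le q 1 (\<theta> k)" for k
    unfolding \<theta>_def by (rule weak_norm_le_scaleR_sign[OF _ F]) simp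
  have \<theta>_apply_y: "blinfun_apply (\<theta> k j) (y j) = \<bar>blinfun_apply (F k j) (y j)\<bar>" for k j
    by (simp add: \<theta>_def uminus_blinfun.rep_eq)
  define c :: "nat \<Rightarrow> real" where "c k = (1/2)^Suc k" for k
  have "c sums 1"
    unfolding c_def by (rule power_half_series)
  then have c: "c k \<ge> 0" "summable c" "suminf c \<le> 1" for k
    by (auto simp: c_def sums_iff)
  define \<Phi> where "\<Phi> j = (\<Sum>k. c k *\<^sub>R \<theta> k j)" for j
  have \<Phi>: "weak_norm_le q 1 \<Phi>"
    unfolding \<Phi>_def using norm_le_one_if_weak_norm_le_one[OF \<theta>] q c
    by (intro weak_norm_le_one_suminf_scaleR[OF q \<theta>]) auto
  have "summable (\<lambda>k. c k *\<^sub>R \<theta> k j)" for j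
    using norm_le_one_if_weak_norm_le_one[OF \<theta>] q by (intro summable_scaleR_if_norm_bounded[OF c(1,2)]) auto
  from bounded_linear.suminf[OF bounded_linear_apply_blinfun this]
  have \<Phi>_apply_y: "blinfun_apply (\<Phi> j) (y j) = (\<Sum>k. c k * \<bar>blinfun_apply (F k j) (y j)\<bar>)" for j
    by (simp add: \<Phi>_def blinfun.scaleR_left \<theta>_apply_y)
  have "c k * \<bar>blinfun_apply (F k j) (y j)\<bar> \<le> \<bar>blinfun_apply (\<Phi> j) (y j)\<bar>" for k j
  proof -
    have "summable (\<lambda>k. c k * \<bar>blinfun_apply (F k j) (y j)\<bar>)"
      using bounded_linear.summable[OF bounded_linear_apply_blinfun[of "y j"]
          \<open>summable (\<lambda>k. c k *\<^sub>R \<theta> k j)\<close>] by (simp add: blinfun.scaleR_left \<theta>_apply_y)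
    then show ?thesis
      unfolding \<Phi>_apply_y using sum_le_suminf[of _ "{k}"] c(1) by fastforce
  qed
  then have "c k * (\<Sum>j. \<bar>blinfun_apply (F k j) (y j)\<bar>) \<le> (\<Sum>j. \<bar>blinfun_apply (\<Phi> j) (y j)\<bar>)" for k
    using summable_pairing[OF F] summable_pairing[OF \<Phi>]
    by (subst suminf_mult[symmetric]) (auto intro: suminf_le summable_mult)
  with \<Phi> show ?thesis
    unfolding c_def by blast
qed

lemma cohen_summable_if_summable_pairings:
  fixes y :: "nat \<Rightarrow> 'a::real_normed_vector"
  assumes p: "1 < p"
    and summable_pairing: "\<And>\<phi> :: nat \<Rightarrow> ('a \<Rightarrow>\<^sub>L real).
      weak_norm_le (p / (p - 1)) 1 \<phi> \<Longrightarrow> summable (\<lambda>j. \<bar>blinfun_apply (\<phi> j) (y j)\<bar>)"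
  shows "cohen_summable p y"
proof (rule ccontr)
  define q where "q = p / (p - 1)"
  have q: "q > 1"
    using p by (simp add: q_def)
  have summable_pairing_q: "\<And>\<phi> :: nat \<Rightarrow> ('a \<Rightarrow>\<^sub>L real).
      weak_norm_le q 1 \<phi> \<Longrightarrow> summable (\<lambda>j. \<bar>blinfun_apply (\<phi> j) (y j)\<bar>)"
    using summable_pairing unfolding q_def .
  assume "\<not> cohen_summable p y"
  then have "\<forall>k::nat. \<exists>\<phi>. weak_norm_le q 1 \<phi> \<and> 2^Suc k * real k < (\<Sum>j. \<bar>blinfun_apply (\<phi> j) (y j)\<bar>)"
    using summable_pairing_q unfolding cohen_summable_def q_def[symmetric] by (meson not_le)
  then obtain F where F: "\<And>k. weak_norm_le q 1 (F k)"
    and F_large: "\<And>k. 2^Suc k * real k < (\<Sum>j. \<bar>blinfun_apply (F k j) (y j)\<bar>)"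
    by metis
  obtain \<Phi> where "weak_norm_le q 1 \<Phi>"
    and \<Phi>: "\<And>k. (1/2)^Suc k * (\<Sum>j. \<bar>blinfun_apply (F k j) (y j)\<bar>) \<le> (\<Sum>j. \<bar>blinfun_apply (\<Phi> j) (y j)\<bar>)"
    using exists_weak_norm_le_one_dominating_pairings[where F=F, OF q F summable_pairing_q] by blast
  have "real k < (\<Sum>j. \<bar>blinfun_apply (\<Phi> j) (y j)\<bar>)" for k
  proof -
    have "real k = (1/2)^Suc k * (2^Suc k * real k)"
      by (simp add: power_one_over)
    also have "\<dots> < (1/2)^Suc k * (\<Sum>j. \<bar>blinfun_apply (F k j) (y j)\<bar>)"
      using F_large[of k] by simp
    also have "\<dots> \<le> (\<Sum>j. \<bar>blinfun_apply (\<Phi> j) (y j)\<bar>)"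
      by (rule \<Phi>)
    finally show ?thesis .
  qed
  then show False
    using reals_Archimedean2 not_less_iff_gr_or_eq by blast
qed

lemma summable_pairing_if_strongly_summable:
  fixes x :: "nat \<Rightarrow> 'a::real_normed_vector" and \<psi> :: "nat \<Rightarrow> ('a \<Rightarrow>\<^sub>L real)"
  assumes p: "1 < p" and x: "strongly_summable p x" and \<psi>: "strongly_summable (p / (p - 1)) \<psi>"
  shows "summable (\<lambda>j. \<bar>blinfun_apply (\<psi> j) (x j)\<bar>)"
proof (rule summable_comparison_test'[where N=0])
  define q where "q = p / (p - 1)"
  have q: "q > 1" "1 / p + 1 / q = 1"
    using p by (auto simp: q_def field_simps)
  show "summable (\<lambda>j. norm (x j) powr p / p + norm (\<psi> j) powr q / q)"
    using x \<psi> unfolding strongly_summable_def q_def by (intro summable_add summable_divide)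
  fix j
  have "norm \<bar>blinfun_apply (\<psi> j) (x j)\<bar> \<le> norm (x j) * norm (\<psi> j)"
    using norm_blinfun[of "\<psi> j" "x j"] by (simp add: mult.commute)
  also have "\<dots> \<le> norm (x j) powr p / p + norm (\<psi> j) powr q / q"
    by (rule Youngs_inequality[OF p q]) auto
  finally show "norm \<bar>blinfun_apply (\<psi> j) (x j)\<bar> \<le> norm (x j) powr p / p + norm (\<psi> j) powr q / q" .
qed

lemma adjoint_op_adjoint_op: "adjoint_op u (adjoint_op v \<phi>) = \<phi> o\<^sub>L (v o\<^sub>L u)"
  unfolding adjoint_op_def by (rule blinfun_eqI) simp

theorem corollary2p11:
  fixes p :: real
    and u :: "'e::banach \<Rightarrow>\<^sub>L 'f::banach"
    and v :: "'f \<Rightarrow>\<^sub>L 'g::banach"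
  assumes "1 < p"
    and "absolutely_mid_summing (p / (p - 1)) (adjoint_op u)"
    and "weakly_mid_summing (p / (p - 1)) (adjoint_op v)"
  shows "cohen_strongly_summing p (blinfun_apply (v o\<^sub>L u))"
  unfolding cohen_strongly_summing_def
proof (intro conjI allI impI blinfun.bounded_linear_right)
  fix x :: "nat \<Rightarrow> 'e"
  assume x: "strongly_summable p x"
  show "cohen_summable p (\<lambda>j. (v o\<^sub>L u) (x j))"
  proof (rule cohen_summable_if_summable_pairings[OF \<open>1 < p\<close>])
    fix \<phi> :: "nat \<Rightarrow> ('g \<Rightarrow>\<^sub>L real)"
    assume "weak_norm_le (p / (p - 1)) 1 \<phi>"
    then have "mid_summable (p / (p - 1)) (\<lambda>j. adjoint_op v (\<phi> j))"
      using assms(3) unfolding weakly_mid_summing_def weakly_summable_def by blast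
    then have "strongly_summable (p / (p - 1)) (\<lambda>j. adjoint_op u (adjoint_op v (\<phi> j)))"
      using assms(2) unfolding absolutely_mid_summing_def by blast
    then have "strongly_summable (p / (p - 1)) (\<lambda>j. \<phi> j o\<^sub>L (v o\<^sub>L u))"
      by (simp only: adjoint_op_adjoint_op)
    from summable_pairing_if_strongly_summable[OF \<open>1 < p\<close> x this]
    show "summable (\<lambda>j. \<bar>blinfun_apply (\<phi> j) ((v o\<^sub>L u) (x j))\<bar>)"
      by simp
  qed
qed

end
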